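(* Let the perturbation parameters $\delta_i^j\ge0$ satisfy $0<\delta^1\le\delta^2\le\dots\le\delta^S$, where $\delta^j:=\sum_{i=1}^C\delta_i^j$. Let $t\mapsto\zeta(t)=(\xi(t),\eta(t))$, $t\in I$, be a solution of $(\mathrm P_\delta)$ such that for all $t\in I$: $\epsilon(t)\neq0$; $n^j(t)\neq0$ and $V^j(t)>0$ for $j=1,\dots,S$; $L^j(t)>0$ and $f_{\mathrm{holdup}}'(L^j(t))\neq0$ for $j=1,\dots,S-1$; and $\partial_Tf_{\mathrm{hl}}(T^j(t),\mathbf x^j(t))\neq0$ for $j=1,\dots,S$. Then the Jacobian $D_\eta g_\delta(\zeta(t))$ is non-singular for every $t\in I$. Moreover, along the solution, $\sum_{i=1}^Cy_i^j=1+\delta^j-\frac{1}{V^j}\Big(\sum_{k=1}^{j}L^k\delta^k-\sum_{k=1}^{j-1}V^k(\delta^k-\delta^{k+1})\Big)$ for $j=1,\dots,S-1$, and $\sum_{i=1}^Cy_i^S=1+\delta^S-\frac{1}{\epsilon V^S}\Big(\sum_{k=1}^{S-1}L^k\delta^k-\sum_{k=1}^{S-1}V^k(\delta^k-\delta^{k+1})\Big)$.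
   Context: Fix integers $S\ge 2$, $C\ge 2$ and an interval $I\subset\mathbb R$. Given are continuously differentiable real functions $f_{\mathrm{vle},i}(P,T,\mathbf x)$ ($i=1,\dots,C$), $f_{\mathrm{hl}}(T,\mathbf x)$, $f_{\mathrm{hv}}(T,\mathbf y)$, $f_{\mathrm{holdup}}(L)$. Controls are continuously differentiable real functions $\epsilon,P,Q,T^{\mathrm{cond}}$ on $I$. State variables: $n^j,H^j,T^j,V^j$, $\mathbf x^j,\mathbf y^j\in\mathbb R^C$ ($j=1,\dots,S$), $L^j$ ($j=1,\dots,S-1$); a solution is a tuple of continuously differentiable state functions satisfying all equations at every $t\in I$. "$2\le j\le S-1$" marks middle-stage equations. For parameters $\delta_i^j\ge0$, the system $(\mathrm P_\delta)$ consists of: (TM) $\dot n^1=L^1-V^1$; $\dot n^j=L^j-V^j-L^{j-1}+V^{j-1}$ ($2\le j\le S-1$); $\dot n^S=-\epsilon V^S-L^{S-1}+V^{S-1}$; (CM$_\delta$) for $i=1,\dots,C-1$: $\dot x_i^1=\big(L^1(x_i^2-x_i^1-\delta_i^1)-V^1(y_i^1-x_i^1-\delta_i^1)\big)/n^1$; $\dot x_i^j=\big(L^j(x_i^{j+1}-x_i^j-\delta_i^j)-V^j(y_i^j-x_i^j-\delta_i^j)+V^{j-1}(y_i^{j-1}-x_i^j-\delta_i^j)\big)/n^j$ ($2\le j\le S-1$); $\dot x_i^S=\big(\epsilon V^S(x_i^S+\delta_i^S-y_i^S)+V^{S-1}(y_i^{S-1}-x_i^S-\delta_i^S)\big)/n^S$;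 (EB) $\dot H^1=L^1f_{\mathrm{hl}}(T^2,\mathbf x^2)-V^1f_{\mathrm{hv}}(T^1,\mathbf y^1)+Q$; $\dot H^j=L^jf_{\mathrm{hl}}(T^{j+1},\mathbf x^{j+1})-V^jf_{\mathrm{hv}}(T^j,\mathbf y^j)-L^{j-1}f_{\mathrm{hl}}(T^j,\mathbf x^j)+V^{j-1}f_{\mathrm{hv}}(T^{j-1},\mathbf y^{j-1})$ ($2\le j\le S-1$); $\dot H^S=(1-\epsilon)V^Sf_{\mathrm{hl}}(T^{\mathrm{cond}},\mathbf y^S)-V^Sf_{\mathrm{hv}}(T^S,\mathbf y^S)-L^{S-1}f_{\mathrm{hl}}(T^S,\mathbf x^S)+V^{S-1}f_{\mathrm{hv}}(T^{S-1},\mathbf y^{S-1})$; and the algebraic equations $g_\delta=0$, where $\mathrm{aux}^1_\delta=\sum_{i=1}^C\big(L^1(x_i^2-x_i^1-\delta_i^1)-V^1(y_i^1-x_i^1-\delta_i^1)\big)/n^1$; for $2\le j\le S-1$, $\mathrm{aux}^j_\delta=\sum_{i=1}^C\big(L^j(x_i^{j+1}-x_i^j-\delta_i^j)-V^j(y_i^j-x_i^j-\delta_i^j)+V^{j-1}(y_i^{j-1}-x_i^j-\delta_i^j)\big)/n^j$; $\mathrm{aux}^S_\delta=\sum_{i=1}^C\big(\epsilon V^S(x_i^S+\delta_i^S-y_i^S)+V^{S-1}(y_i^{S-1}-x_i^S-\delta_i^S)\big)/n^S$; $\mathrm{ydef}_i^j=y_i^j-f_{\mathrm{vle},i}(P,T^j,\mathbf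 x^j)$; $\mathrm{edef}^j=H^j-n^jf_{\mathrm{hl}}(T^j,\mathbf x^j)$; $\mathrm{xsum}^j=x_C^j-1+\sum_{i=1}^{C-1}x_i^j$; $\mathrm{hold}^j=n^j-f_{\mathrm{holdup}}(L^{j-1})$ ($j=2,\dots,S$); collected as $g_\delta=(\mathrm{aux}^S_\delta,\dots,\mathrm{aux}^1_\delta,\mathbf{ydef}^1,\dots,\mathbf{ydef}^S,\mathrm{edef}^1,\dots,\mathrm{edef}^S,\mathrm{xsum}^1,\dots,\mathrm{xsum}^S,\mathrm{hold}^2,\dots,\mathrm{hold}^S)$ with $\mathbf{ydef}^j=(\mathrm{ydef}^j_1,\dots,\mathrm{ydef}^j_C)$. Differential variables $\xi=(n^1,\dots,n^S,\hat{\mathbf x}^1,\dots,\hat{\mathbf x}^S,H^1,\dots,H^S)$, $\hat{\mathbf x}^j=(x_1^j,\dots,x_{C-1}^j)$; algebraic variables $\eta=(V^S,\dots,V^1,\mathbf y^1,\dots,\mathbf y^S,T^1,\dots,T^S,x_C^1,\dots,x_C^S,L^1,\dots,L^{S-1})$. $D_\eta g_\delta$ is the Jacobian of $g_\delta$ with respect to $\eta$ (with $\xi$ and the controls held fixed). *)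

theory Defs
  imports "HOL-Analysis.Analysis"
begin

text \<open>Components i = 1..C are indexed by a finite type 'c (CARD('c) = C) with a
  distinguished element cC playing the role of the C-th component; stages j are
  natural numbers 1..S.\<close>

datatype 'c avar = AV nat | AY nat 'c | AT nat | AX nat | AL nat
datatype 'c geqn = EAux nat | EYdef nat 'c | EEdef nat | EXsum nat | EHold nat

definition avars :: "nat \<Rightarrow> 'c avar set" where
  "avars S = {AV j | j. j \<in> {1..S}} \<union> {AY j i | j i. j \<in> {1..S}} \<union> {AT j | j. j \<in> {1..S}}
     \<union> {AX j | j. j \<in> {1..S}} \<union> {AL j | j. j \<in> {1..<S}}"

definition geqns :: "nat \<Rightarrow> 'c geqn set" where
  "geqns S = {EAux j | j. j \<in> {1..S}} \<union> {EYdef j i | j i. j \<in> {1..S}} \<union> {EEdef j | j. j \<in> {1..S}}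
     \<union> {EXsum j | j. j \<in> {1..S}} \<union> {EHold j | j. j \<in> {2..S}}"

definition C1_map :: "('a::real_normed_vector \<Rightarrow> 'b::real_normed_vector) \<Rightarrow> bool" where
  "C1_map f \<longleftrightarrow> (\<exists>f'. (\<forall>z. (f has_derivative blinfun_apply (f' z)) (at z)) \<and> continuous_on UNIV f')"

definition C1_on :: "real set \<Rightarrow> (real \<Rightarrow> 'b::real_normed_vector) \<Rightarrow> bool" where
  "C1_on I u \<longleftrightarrow> (\<exists>u'. (\<forall>t\<in>I. (u has_vector_derivative u' t) (at t within I)) \<and> continuous_on I u')"

definition dsum :: "(nat \<Rightarrow> 'c::finite \<Rightarrow> real) \<Rightarrow> nat \<Rightarrow> real" where
  "dsum \<delta> j = (\<Sum>i\<in>UNIV. \<delta> j i)"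

text \<open>The algebraic equations g_delta, as a function of the differential variables
  (n, H and the components x_i^j, i \<noteq> cC, taken from xh), the controls eps, P and the
  algebraic variables eta.\<close>
definition g_delta :: "nat \<Rightarrow> 'c::finite \<Rightarrow> (nat \<Rightarrow> 'c \<Rightarrow> real)
    \<Rightarrow> ('c \<Rightarrow> real \<Rightarrow> real \<Rightarrow> real^'c \<Rightarrow> real) \<Rightarrow> (real \<Rightarrow> real^'c \<Rightarrow> real) \<Rightarrow> (real \<Rightarrow> real)
    \<Rightarrow> real \<Rightarrow> real \<Rightarrow> (nat \<Rightarrow> real) \<Rightarrow> (nat \<Rightarrow> real) \<Rightarrow> (nat \<Rightarrow> real^'c)
    \<Rightarrow> ('c avar \<Rightarrow> real) \<Rightarrow> 'c geqn \<Rightarrow> real" where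
  "g_delta S cC \<delta> fvle fhl fhold eps P n H xh \<eta> r =
    (let V = (\<lambda>j. \<eta> (AV j));
         y = (\<lambda>j. \<chi> i. \<eta> (AY j i));
         T = (\<lambda>j. \<eta> (AT j));
         x = (\<lambda>j. \<chi> i. if i = cC then \<eta> (AX j) else xh j $ i);
         L = (\<lambda>j. \<eta> (AL j))
     in case r of
       EAux j \<Rightarrow>
         (if j = 1 then
            (\<Sum>i\<in>UNIV. L 1 * (x 2 $ i - x 1 $ i - \<delta> 1 i) - V 1 * (y 1 $ i - x 1 $ i - \<delta> 1 i)) / n 1
          else if j = S then
            (\<Sum>i\<in>UNIV. eps * V S * (x S $ i + \<delta> S i - y S $ i)
                        + V (S-1) * (y (S-1) $ i - x S $ i - \<delta> S i)) / n S
          else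
            (\<Sum>i\<in>UNIV. L j * (x (j+1) $ i - x j $ i - \<delta> j i) - V j * (y j $ i - x j $ i - \<delta> j i)
                        + V (j-1) * (y (j-1) $ i - x j $ i - \<delta> j i)) / n j)
     | EYdef j i \<Rightarrow> y j $ i - fvle i P (T j) (x j)
     | EEdef j \<Rightarrow> H j - n j * fhl (T j) (x j)
     | EXsum j \<Rightarrow> x j $ cC - 1 + (\<Sum>i\<in>UNIV - {cC}. x j $ i)
     | EHold j \<Rightarrow> n j - fhold (L (j-1)))"

definition jac_eta :: "nat \<Rightarrow> 'c::finite \<Rightarrow> (nat \<Rightarrow> 'c \<Rightarrow> real)
    \<Rightarrow> ('c \<Rightarrow> real \<Rightarrow> real \<Rightarrow> real^'c \<Rightarrow> real) \<Rightarrow> (real \<Rightarrow> real^'c \<Rightarrow> real) \<Rightarrow> (real \<Rightarrow> real)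
    \<Rightarrow> real \<Rightarrow> real \<Rightarrow> (nat \<Rightarrow> real) \<Rightarrow> (nat \<Rightarrow> real) \<Rightarrow> (nat \<Rightarrow> real^'c)
    \<Rightarrow> ('c avar \<Rightarrow> real) \<Rightarrow> 'c geqn \<Rightarrow> 'c avar \<Rightarrow> real" where
  "jac_eta S cC \<delta> fvle fhl fhold eps P n H xh \<eta> r c =
     deriv (\<lambda>s. g_delta S cC \<delta> fvle fhl fhold eps P n H xh (\<eta>(c := s)) r) (\<eta> c)"

definition nonsingular_on :: "('r \<Rightarrow> 'v \<Rightarrow> real) \<Rightarrow> 'r set \<Rightarrow> 'v set \<Rightarrow> bool" where
  "nonsingular_on J R Cs \<longleftrightarrow> finite R \<and> finite Cs \<and> card R = card Cs \<and>
     (\<forall>v. (\<forall>r\<in>R. (\<Sum>c\<in>Cs. J r c * v c) = 0) \<longrightarrow> (\<forall>c\<in>Cs. v c = 0))"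

definition eta_sol :: "'c \<Rightarrow> (nat \<Rightarrow> real \<Rightarrow> real) \<Rightarrow> (nat \<Rightarrow> real \<Rightarrow> real^'c) \<Rightarrow> (nat \<Rightarrow> real \<Rightarrow> real)
    \<Rightarrow> (nat \<Rightarrow> real \<Rightarrow> real^'c) \<Rightarrow> (nat \<Rightarrow> real \<Rightarrow> real) \<Rightarrow> real \<Rightarrow> 'c avar \<Rightarrow> real" where
  "eta_sol cC V y T x L t c = (case c of AV j \<Rightarrow> V j t | AY j i \<Rightarrow> y j t $ i | AT j \<Rightarrow> T j t
      | AX j \<Rightarrow> x j t $ cC | AL j \<Rightarrow> L j t)"

end

theory Submission
  imports Defs
begin

(* Summing aux^j over the components and using xsum^j = 1 turns the component balances into the
   recursion  V^j (Y^j - 1 - delta^j) = V^(j-1) (Y^(j-1) - 1 - delta^j) - L^j delta^j  for the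
   vapour totals Y^j = sum_i y_i^j. Its solution is minus the perturbation_flux, i.e. the
   bracketed sums of the statement, which gives the formulas for Y^j.

   For the Jacobian, pair xsum^j with x_C^j, hold^(j+1) with L^j, edef^j with T^j, ydef_i^j with
   y_i^j and aux^j with V^j. No equation depends on a variable of elimination_rank at least that of
   its pivot, other than the pivot itself, so D_eta g_delta is block triangular. Its diagonal
   entries 1, -f_holdup', -n^j d_T f_hl, 1 and -(Y^j - 1 - delta^j)/n^j, resp.
   epsilon (1 + delta^S - Y^S)/n^S, are nonzero: the last ones because the flux is positive when
   delta^1 > 0 and delta^j is nondecreasing. *)

lemma nonsingular_on_triangular:
  fixes J :: "'r \<Rightarrow> 'v \<Rightarrow> real" and rank :: "'v \<Rightarrow> nat"
  assumes fin: "finite R" and bij: "bij_betw pivot R Cs"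
    and diag: "\<And>r. r \<in> R \<Longrightarrow> J r (pivot r) \<noteq> 0"
    and upper: "\<And>r c. r \<in> R \<Longrightarrow> c \<in> Cs \<Longrightarrow> c \<noteq> pivot r \<Longrightarrow>
                  rank (pivot r) \<le> rank c \<Longrightarrow> J r c = 0"
  shows "nonsingular_on J R Cs"
  unfolding nonsingular_on_def
proof (intro conjI allI impI ballI)
  show "finite R" by (fact fin)
  show finCs: "finite Cs" using bij_betw_finite bij fin by blast
  show "card R = card Cs" using bij by (rule bij_betw_same_card)
  fix v c
  assume rows: "\<forall>r\<in>R. (\<Sum>c\<in>Cs. J r c * v c) = 0" and "c \<in> Cs"
  then show "v c = 0"
  proof (induction c rule: measure_induct_rule[of rank])
    case (less c)
    obtain r where r: "r \<in> R" "pivot r = c"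
      using bij \<open>c \<in> Cs\<close> by (metis bij_betw_imp_surj_on imageE)
    have "(\<Sum>c'\<in>Cs - {c}. J r c' * v c') = 0"
      using less.IH upper[of r] r rows by (intro sum.neutral) fastforce
    then have "(\<Sum>c\<in>Cs. J r c * v c) = J r c * v c"
      by (simp add: sum.remove[OF finCs \<open>c \<in> Cs\<close>])
    then show "v c = 0" using rows r diag[of r] by simp
  qed
qed

lemma C1_map_differentiable: "C1_map f \<Longrightarrow> f differentiable at z"
  unfolding C1_map_def differentiable_def by blast

lemma C1_map_partial_differentiable:
  assumes "C1_map (\<lambda>(u::'a::real_normed_vector, v::'b::real_normed_vector). f u v :: 'c::real_normed_vector)"
  shows "(\<lambda>u. f u v) differentiable at z"
proof -
  have "(\<lambda>(u, v). f u v) \<circ> (\<lambda>u. (u, v)) differentiable at z"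
    using C1_map_differentiable[OF assms] by (intro differentiable_chain_at) (auto intro: derivative_intros)
  then show ?thesis by (simp add: o_def)
qed

definition perturbation_flux ::
    "(nat \<Rightarrow> real) \<Rightarrow> (nat \<Rightarrow> real) \<Rightarrow> (nat \<Rightarrow> real) \<Rightarrow> nat \<Rightarrow> nat \<Rightarrow> real"
  where "perturbation_flux L V D j m = (\<Sum>k=1..j. L k * D k) - (\<Sum>k=1..<m. V k * (D k - D (k+1)))"

lemma perturbation_flux_Suc_left:
  "perturbation_flux L V D (Suc j) m = perturbation_flux L V D j m + L (Suc j) * D (Suc j)"
  by (simp add: perturbation_flux_def)

lemma perturbation_flux_Suc_right:
  "1 \<le> m \<Longrightarrow>
   perturbation_flux L V D j (Suc m) = perturbation_flux L V D j m - V m * (D m - D (Suc m))"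
  by (simp add: perturbation_flux_def)

lemma perturbation_flux_pos:
  assumes "1 \<le> j"
    and "\<And>k. 1 \<le> k \<Longrightarrow> k \<le> j \<Longrightarrow> L k > 0 \<and> D k > 0"
    and "\<And>k. 1 \<le> k \<Longrightarrow> k < m \<Longrightarrow> V k \<ge> 0 \<and> D k \<le> D (k+1)"
  shows "perturbation_flux L V D j m > 0"
proof -
  have "(\<Sum>k=1..j. L k * D k) > 0"
    using assms(1,2) by (intro sum_pos) auto
  moreover have "(\<Sum>k=1..<m. V k * (D k - D (k+1))) \<le> 0"
    using assms(3) by (intro sum_nonpos) (simp add: mult_nonneg_nonpos)
  ultimately show ?thesis by (simp add: perturbation_flux_def)
qed

lemma stage_balance_closed_form:
  fixes L V D Y :: "nat \<Rightarrow> real"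
  assumes first: "V 1 * (Y 1 - 1 - D 1) = - L 1 * D 1"
    and balance: "\<And>j. 2 \<le> j \<Longrightarrow> j < S \<Longrightarrow>
                 V j * (Y j - 1 - D j) = V (j-1) * (Y (j-1) - 1 - D j) - L j * D j"
  shows "1 \<le> j \<Longrightarrow> j < S \<Longrightarrow> V j * (Y j - 1 - D j) = - perturbation_flux L V D j j"
proof (induction j rule: dec_induct)
  case base
  then show ?case using first by (simp add: perturbation_flux_def)
next
  case (step j)
  have "V (Suc j) * (Y (Suc j) - 1 - D (Suc j)) = V j * (Y j - 1 - D (Suc j)) - L (Suc j) * D (Suc j)"
    using balance[of "Suc j"] step.hyps step.prems by simp
  also have "\<dots> = V j * (Y j - 1 - D j) + V j * (D j - D (Suc j)) - L (Suc j) * D (Suc j)"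
    by (simp add: algebra_simps)
  also have "\<dots> = - perturbation_flux L V D (Suc j) (Suc j)"
    using step by (simp add: perturbation_flux_Suc_left perturbation_flux_Suc_right)
  finally show ?case .
qed

definition liquid_composition :: "'c \<Rightarrow> (nat \<Rightarrow> real^'c) \<Rightarrow> ('c avar \<Rightarrow> real) \<Rightarrow> nat \<Rightarrow> real^'c"
  where "liquid_composition cC xh \<eta> j = (\<chi> i. if i = cC then \<eta> (AX j) else xh j $ i)"

lemma liquid_composition_update [simp]:
  "c \<noteq> AX j \<Longrightarrow> liquid_composition cC xh (\<eta>(c := s)) j = liquid_composition cC xh \<eta> j"
  by (auto simp: liquid_composition_def)

fun eqn_pivot :: "'c geqn \<Rightarrow> 'c avar" where
  "eqn_pivot (EAux j) = AV j"
| "eqn_pivot (EYdef j i) = AY j i"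
| "eqn_pivot (EEdef j) = AT j"
| "eqn_pivot (EXsum j) = AX j"
| "eqn_pivot (EHold j) = AL (j - 1)"

fun elimination_rank :: "'c avar \<Rightarrow> nat" where
  "elimination_rank (AX j) = 0"
| "elimination_rank (AL j) = 0"
| "elimination_rank (AT j) = 1"
| "elimination_rank (AY j i) = 2"
| "elimination_rank (AV j) = j + 3"

lemma bij_betw_eqn_pivot: "bij_betw eqn_pivot (geqns S) (avars S)"
proof (rule bij_betw_byWitness)
  let ?eqn = "case_avar EAux EYdef EEdef EXsum (\<lambda>j. EHold (j + 1))"
  show "\<forall>r\<in>geqns S. ?eqn (eqn_pivot r) = r" by (auto simp: geqns_def)
  show "\<forall>c\<in>avars S. eqn_pivot (?eqn c) = c" by (auto simp: avars_def)
  show "eqn_pivot ` geqns S \<subseteq> avars S" by (auto simp: geqns_def avars_def)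
  show "?eqn ` avars S \<subseteq> geqns S" by (auto simp: geqns_def avars_def)
qed

lemma finite_geqns: "finite (geqns S :: 'c::finite geqn set)"
proof (rule finite_subset)
  show "geqns S \<subseteq> EAux ` {1..S} \<union> case_prod EYdef ` ({1..S} \<times> UNIV) \<union> EEdef ` {1..S}
                   \<union> EXsum ` {1..S} \<union> EHold ` {2..S}"
    by (auto simp: geqns_def)
qed auto

context
  fixes S :: nat and cC :: "'c::finite" and \<delta> :: "nat \<Rightarrow> 'c \<Rightarrow> real"
    and fvle :: "'c \<Rightarrow> real \<Rightarrow> real \<Rightarrow> real^'c \<Rightarrow> real"
    and fhl :: "real \<Rightarrow> real^'c \<Rightarrow> real" and fhold :: "real \<Rightarrow> real"
    and e p :: real and n H :: "nat \<Rightarrow> real" and xh :: "nat \<Rightarrow> real^'c"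
begin

private abbreviation "g \<equiv> g_delta S cC \<delta> fvle fhl fhold e p n H xh"
private abbreviation "J \<equiv> jac_eta S cC \<delta> fvle fhl fhold e p n H xh"
private abbreviation "liquid_total \<eta> j \<equiv> \<Sum>i\<in>UNIV. liquid_composition cC xh \<eta> j $ i"
private abbreviation "vapour_total \<eta> j \<equiv> \<Sum>i\<in>UNIV. \<eta> (AY j i)"

lemma g_delta_EXsum: "g \<eta> (EXsum j) = liquid_total \<eta> j - 1"
proof -
  have "liquid_total \<eta> j = \<eta> (AX j) + (\<Sum>i\<in>UNIV - {cC}. xh j $ i)"
    by (simp add: sum.remove[of UNIV cC] liquid_composition_def)
  then show ?thesis by (simp add: g_delta_def)
qed

lemma g_delta_EAux_first:
  "g \<eta> (EAux 1) = (\<eta> (AL 1) * (liquid_total \<eta> 2 - liquid_total \<eta> 1 - dsum \<delta> 1)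
                   - \<eta> (AV 1) * (vapour_total \<eta> 1 - liquid_total \<eta> 1 - dsum \<delta> 1)) / n 1"
  by (simp add: g_delta_def liquid_composition_def dsum_def right_diff_distrib sum_subtractf
      sum_distrib_left[symmetric])

lemma g_delta_EAux_middle:
  "j \<noteq> 1 \<Longrightarrow> j \<noteq> S \<Longrightarrow>
   g \<eta> (EAux j) = (\<eta> (AL j) * (liquid_total \<eta> (j+1) - liquid_total \<eta> j - dsum \<delta> j)
                   - \<eta> (AV j) * (vapour_total \<eta> j - liquid_total \<eta> j - dsum \<delta> j)
                   + \<eta> (AV (j-1)) * (vapour_total \<eta> (j-1) - liquid_total \<eta> j - dsum \<delta> j)) / n j"
  by (simp add: g_delta_def liquid_composition_def dsum_def right_diff_distrib distrib_left
      sum_subtractf sum.distrib sum_distrib_left[symmetric])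

lemma g_delta_EAux_last:
  "S \<noteq> 1 \<Longrightarrow>
   g \<eta> (EAux S) = (e * \<eta> (AV S) * (liquid_total \<eta> S + dsum \<delta> S - vapour_total \<eta> S)
                   + \<eta> (AV (S-1)) * (vapour_total \<eta> (S-1) - liquid_total \<eta> S - dsum \<delta> S)) / n S"
  by (simp add: g_delta_def liquid_composition_def dsum_def right_diff_distrib distrib_left
      sum_subtractf sum.distrib sum_distrib_left[symmetric])

lemma g_delta_update_indep:
  assumes "c \<noteq> eqn_pivot r" and "elimination_rank (eqn_pivot r) \<le> elimination_rank c"
  shows "g (\<eta>(c := s)) r = g \<eta> r"
  using assms by (cases r; cases c) (auto simp: g_delta_def cong: if_cong)

lemma jac_eta_eq_0_beyond_pivot:
  "c \<noteq> eqn_pivot r \<Longrightarrow> elimination_rank (eqn_pivot r) \<le> elimination_rank c \<Longrightarrow> J \<eta> r c = 0"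
  by (simp add: jac_eta_def g_delta_update_indep)

lemma jac_eta_EXsum: "J \<eta> (EXsum j) (AX j) = 1"
proof -
  have "(\<lambda>s. g (\<eta>(AX j := s)) (EXsum j)) = (\<lambda>s. s - 1 + (\<Sum>i\<in>UNIV - {cC}. xh j $ i))"
    by (simp add: g_delta_def)
  then show ?thesis
    unfolding jac_eta_def by (auto intro!: DERIV_imp_deriv derivative_eq_intros)
qed

lemma jac_eta_EYdef: "J \<eta> (EYdef j i) (AY j i) = 1"
proof -
  have "(\<lambda>s. g (\<eta>(AY j i := s)) (EYdef j i))
        = (\<lambda>s. s - fvle i p (\<eta> (AT j)) (liquid_composition cC xh \<eta> j))"
    by (simp add: g_delta_def liquid_composition_def cong: if_cong)
  then show ?thesis
    unfolding jac_eta_def by (auto intro!: DERIV_imp_deriv derivative_eq_intros)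
qed

lemma jac_eta_EEdef:
  assumes "(\<lambda>T. fhl T (liquid_composition cC xh \<eta> j)) differentiable at (\<eta> (AT j))"
  shows "J \<eta> (EEdef j) (AT j) = - n j * deriv (\<lambda>T. fhl T (liquid_composition cC xh \<eta> j)) (\<eta> (AT j))"
proof -
  have "(\<lambda>s. g (\<eta>(AT j := s)) (EEdef j)) = (\<lambda>s. H j - n j * fhl s (liquid_composition cC xh \<eta> j))"
    by (simp add: g_delta_def liquid_composition_def cong: if_cong)
  moreover have "((\<lambda>s. H j - n j * fhl s (liquid_composition cC xh \<eta> j)) has_real_derivative
                   - n j * deriv (\<lambda>T. fhl T (liquid_composition cC xh \<eta> j)) (\<eta> (AT j))) (at (\<eta> (AT j)))"
    using assms by (auto intro!: derivative_eq_intros simp: DERIV_deriv_iff_real_differentiable)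
  ultimately show ?thesis
    unfolding jac_eta_def by (simp add: DERIV_imp_deriv)
qed

lemma jac_eta_EHold:
  assumes "fhold differentiable at (\<eta> (AL (j - 1)))"
  shows "J \<eta> (EHold j) (AL (j - 1)) = - deriv fhold (\<eta> (AL (j - 1)))"
proof -
  have "(\<lambda>s. g (\<eta>(AL (j - 1) := s)) (EHold j)) = (\<lambda>s. n j - fhold s)"
    by (simp add: g_delta_def)
  moreover have "((\<lambda>s. n j - fhold s) has_real_derivative - deriv fhold (\<eta> (AL (j - 1)))) (at (\<eta> (AL (j - 1))))"
    using assms by (auto intro!: derivative_eq_intros simp: DERIV_deriv_iff_real_differentiable)
  ultimately show ?thesis
    unfolding jac_eta_def by (simp add: DERIV_imp_deriv)
qed

lemma jac_eta_EAux:
  assumes "1 \<le> j" "j \<noteq> S"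
  shows "J \<eta> (EAux j) (AV j) = - (vapour_total \<eta> j - liquid_total \<eta> j - dsum \<delta> j) / n j"
proof -
  have "j - 1 \<noteq> j" using assms(1) by simp
  obtain a where
    "\<And>s. g (\<eta>(AV j := s)) (EAux j) = (a - s * (vapour_total \<eta> j - liquid_total \<eta> j - dsum \<delta> j)) / n j"
  proof (cases "j = 1")
    case True
    have "g (\<eta>(AV 1 := s)) (EAux 1) = (\<eta> (AL 1) * (liquid_total \<eta> 2 - liquid_total \<eta> 1 - dsum \<delta> 1)
            - s * (vapour_total \<eta> 1 - liquid_total \<eta> 1 - dsum \<delta> 1)) / n 1" for s
      unfolding g_delta_EAux_first by simp
    then show ?thesis using that True by blast
  next
    case False
    show ?thesis
      by (rule that[of "\<eta> (AL j) * (liquid_total \<eta> (j+1) - liquid_total \<eta> j - dsum \<delta> j)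
                        + \<eta> (AV (j-1)) * (vapour_total \<eta> (j-1) - liquid_total \<eta> j - dsum \<delta> j)"])
        (use False assms \<open>j - 1 \<noteq> j\<close> in \<open>simp add: g_delta_EAux_middle\<close>)
  qed
  then have "((\<lambda>s. g (\<eta>(AV j := s)) (EAux j)) has_real_derivative
               - (vapour_total \<eta> j - liquid_total \<eta> j - dsum \<delta> j) / n j) (at (\<eta> (AV j)))"
    by (auto intro!: DERIV_cdivide derivative_eq_intros)
  then show ?thesis
    unfolding jac_eta_def by (rule DERIV_imp_deriv)
qed

lemma jac_eta_EAux_last:
  assumes "2 \<le> S"
  shows "J \<eta> (EAux S) (AV S) = e * (liquid_total \<eta> S + dsum \<delta> S - vapour_total \<eta> S) / n S"
proof -
  have "S - 1 \<noteq> S" "S \<noteq> 1" using assms by auto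
  then have "((\<lambda>s. g (\<eta>(AV S := s)) (EAux S)) has_real_derivative
               e * (liquid_total \<eta> S + dsum \<delta> S - vapour_total \<eta> S) / n S) (at (\<eta> (AV S)))"
    by (auto simp: g_delta_EAux_last intro!: DERIV_cdivide derivative_eq_intros)
  then show ?thesis
    unfolding jac_eta_def by (rule DERIV_imp_deriv)
qed

lemma g_delta_jacobian_nonsingular:
  assumes "2 \<le> S" and "e \<noteq> 0"
    and n_nz: "\<And>j. j \<in> {1..S} \<Longrightarrow> n j \<noteq> 0"
    and vapour_total_ne: "\<And>j. j \<in> {1..S} \<Longrightarrow> vapour_total \<eta> j \<noteq> liquid_total \<eta> j + dsum \<delta> j"
    and hold_nz: "\<And>j. j \<in> {1..<S} \<Longrightarrow> fhold differentiable at (\<eta> (AL j)) \<and> deriv fhold (\<eta> (AL j)) \<noteq> 0"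
    and hl_nz: "\<And>j. j \<in> {1..S} \<Longrightarrow>
               (\<lambda>T. fhl T (liquid_composition cC xh \<eta> j)) differentiable at (\<eta> (AT j))
               \<and> deriv (\<lambda>T. fhl T (liquid_composition cC xh \<eta> j)) (\<eta> (AT j)) \<noteq> 0"
  shows "nonsingular_on (J \<eta>) (geqns S) (avars S)"
proof (rule nonsingular_on_triangular[where rank = elimination_rank, OF finite_geqns bij_betw_eqn_pivot])
  show "J \<eta> r c = 0" if "c \<noteq> eqn_pivot r" "elimination_rank (eqn_pivot r) \<le> elimination_rank c" for r c
    using that by (rule jac_eta_eq_0_beyond_pivot)
  fix r :: "'c geqn"
  assume "r \<in> geqns S"
  then consider (aux) j where "r = EAux j" "j \<in> {1..S}"
    | (ydef) j i where "r = EYdef j i"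
    | (edef) j where "r = EEdef j" "j \<in> {1..S}"
    | (xsum) j where "r = EXsum j"
    | (hold) j where "r = EHold j" "j \<in> {2..S}"
    by (auto simp: geqns_def)
  then show "J \<eta> r (eqn_pivot r) \<noteq> 0"
  proof cases
    case aux
    show ?thesis
    proof (cases "j = S")
      case True
      then show ?thesis using aux assms(1,2) n_nz[of S] vapour_total_ne[of S] by (simp add: jac_eta_EAux_last)
    next
      case False
      then show ?thesis using aux n_nz[of j] vapour_total_ne[of j] by (simp add: jac_eta_EAux)
    qed
  next
    case edef
    with n_nz hl_nz show ?thesis by (simp add: jac_eta_EEdef)
  next
    case hold
    then have "j - 1 \<in> {1..<S}" by auto
    then have "fhold differentiable at (\<eta> (AL (j - 1)))" "deriv fhold (\<eta> (AL (j - 1))) \<noteq> 0"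
      using hold_nz by blast+
    with hold jac_eta_EHold[of \<eta> j] show ?thesis by simp
  qed (simp_all add: jac_eta_EYdef jac_eta_EXsum)
qed

lemma g_delta_zero_liquid_total:
  assumes "\<forall>r\<in>geqns S. g \<eta> r = 0" and "j \<in> {1..S}"
  shows "liquid_total \<eta> j = 1"
  using assms g_delta_EXsum[of \<eta> j] by (simp add: geqns_def)

lemma g_delta_zero_stage_balance:
  fixes \<eta> :: "'c avar \<Rightarrow> real"
  defines "flux \<equiv> perturbation_flux (\<lambda>k. \<eta> (AL k)) (\<lambda>k. \<eta> (AV k)) (dsum \<delta>)"
  assumes zero: "\<forall>r\<in>geqns S. g \<eta> r = 0" and "2 \<le> S"
    and n_nz: "\<And>j. j \<in> {1..S} \<Longrightarrow> n j \<noteq> 0"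
  shows "\<And>j. j \<in> {1..<S} \<Longrightarrow> \<eta> (AV j) * (vapour_total \<eta> j - 1 - dsum \<delta> j) = - flux j j"
    and "e * \<eta> (AV S) * (vapour_total \<eta> S - 1 - dsum \<delta> S) = - flux (S - 1) S"
proof -
  have aux_zero: "g \<eta> (EAux j) = 0" "n j \<noteq> 0" "liquid_total \<eta> j = 1" if "j \<in> {1..S}" for j
    using that zero n_nz g_delta_zero_liquid_total by (auto simp: geqns_def)
  have closed: "\<eta> (AV j) * (vapour_total \<eta> j - 1 - dsum \<delta> j) = - flux j j" if "1 \<le> j" "j < S" for j
    unfolding flux_def
  proof (rule stage_balance_closed_form[OF _ _ that])
    show "\<eta> (AV 1) * (vapour_total \<eta> 1 - 1 - dsum \<delta> 1) = - \<eta> (AL 1) * dsum \<delta> 1"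
      using aux_zero[of 1] aux_zero[of 2] \<open>2 \<le> S\<close> g_delta_EAux_first[of \<eta>] by simp
    show "\<eta> (AV j) * (vapour_total \<eta> j - 1 - dsum \<delta> j)
          = \<eta> (AV (j - 1)) * (vapour_total \<eta> (j - 1) - 1 - dsum \<delta> j) - \<eta> (AL j) * dsum \<delta> j"
      if "2 \<le> j" "j < S" for j
      using that aux_zero[of j] aux_zero[of "j + 1"] by (simp add: g_delta_EAux_middle algebra_simps)
  qed
  then show "\<And>j. j \<in> {1..<S} \<Longrightarrow> \<eta> (AV j) * (vapour_total \<eta> j - 1 - dsum \<delta> j) = - flux j j"
    by simp
  have "e * \<eta> (AV S) * (vapour_total \<eta> S - 1 - dsum \<delta> S)
        = \<eta> (AV (S - 1)) * (vapour_total \<eta> (S - 1) - 1 - dsum \<delta> (S - 1))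
          + \<eta> (AV (S - 1)) * (dsum \<delta> (S - 1) - dsum \<delta> S)"
    using aux_zero[of S] \<open>2 \<le> S\<close> by (simp add: g_delta_EAux_last algebra_simps)
  also have "\<dots> = - flux (S - 1) S"
    using closed[of "S - 1"] \<open>2 \<le> S\<close> perturbation_flux_Suc_right[of "S - 1"] by (simp add: flux_def)
  finally show "e * \<eta> (AV S) * (vapour_total \<eta> S - 1 - dsum \<delta> S) = - flux (S - 1) S" .
qed

lemma g_delta_zero_vapour_sums:
  fixes \<eta> :: "'c avar \<Rightarrow> real"
  defines "flux \<equiv> perturbation_flux (\<lambda>k. \<eta> (AL k)) (\<lambda>k. \<eta> (AV k)) (dsum \<delta>)"
  assumes zero: "\<forall>r\<in>geqns S. g \<eta> r = 0" and S2: "2 \<le> S" and e_nz: "e \<noteq> 0"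
    and n_nz: "\<And>j. j \<in> {1..S} \<Longrightarrow> n j \<noteq> 0"
    and V_nz: "\<And>j. j \<in> {1..S} \<Longrightarrow> \<eta> (AV j) \<noteq> 0"
  shows "\<And>j. j \<in> {1..<S} \<Longrightarrow> vapour_total \<eta> j = 1 + dsum \<delta> j - (1 / \<eta> (AV j)) * flux j j"
    and "vapour_total \<eta> S = 1 + dsum \<delta> S - (1 / (e * \<eta> (AV S))) * flux (S - 1) S"
proof -
  show "vapour_total \<eta> j = 1 + dsum \<delta> j - (1 / \<eta> (AV j)) * flux j j" if "j \<in> {1..<S}" for j
  proof -
    have "\<eta> (AV j) * (vapour_total \<eta> j - 1 - dsum \<delta> j) = - flux j j"
      unfolding flux_def using zero S2 n_nz that by (rule g_delta_zero_stage_balance(1))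
    then show ?thesis using V_nz[of j] that by (simp add: field_simps)
  qed
  have "e * \<eta> (AV S) * (vapour_total \<eta> S - 1 - dsum \<delta> S) = - flux (S - 1) S"
    unfolding flux_def using zero S2 n_nz by (rule g_delta_zero_stage_balance(2))
  then show "vapour_total \<eta> S = 1 + dsum \<delta> S - (1 / (e * \<eta> (AV S))) * flux (S - 1) S"
    using V_nz[of S] S2 e_nz by (simp add: field_simps)
qed

lemma g_delta_zero_jacobian_nonsingular:
  fixes \<eta> :: "'c avar \<Rightarrow> real"
  assumes zero: "\<forall>r\<in>geqns S. g \<eta> r = 0" and S2: "2 \<le> S" and e_nz: "e \<noteq> 0"
    and n_nz: "\<And>j. j \<in> {1..S} \<Longrightarrow> n j \<noteq> 0"
    and V_pos: "\<And>j. j \<in> {1..S} \<Longrightarrow> \<eta> (AV j) > 0"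
    and L_pos: "\<And>j. j \<in> {1..<S} \<Longrightarrow> \<eta> (AL j) > 0"
    and \<delta>_pos: "0 < dsum \<delta> 1"
    and \<delta>_mono: "\<And>j. j \<in> {1..<S} \<Longrightarrow> dsum \<delta> j \<le> dsum \<delta> (j + 1)"
    and hold_nz: "\<And>j. j \<in> {1..<S} \<Longrightarrow> fhold differentiable at (\<eta> (AL j)) \<and> deriv fhold (\<eta> (AL j)) \<noteq> 0"
    and hl_nz: "\<And>j. j \<in> {1..S} \<Longrightarrow>
               (\<lambda>T. fhl T (liquid_composition cC xh \<eta> j)) differentiable at (\<eta> (AT j))
               \<and> deriv (\<lambda>T. fhl T (liquid_composition cC xh \<eta> j)) (\<eta> (AT j)) \<noteq> 0"
  shows "nonsingular_on (J \<eta>) (geqns S) (avars S)"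
proof (rule g_delta_jacobian_nonsingular[OF S2 e_nz])
  let ?flux = "perturbation_flux (\<lambda>k. \<eta> (AL k)) (\<lambda>k. \<eta> (AV k)) (dsum \<delta>)"
  have D_pos: "0 < dsum \<delta> k" if "k \<in> {1..S}" for k
    using \<delta>_pos lift_Suc_mono_le_ivl[of "{1..<S}" "dsum \<delta>" 1 k] \<delta>_mono that by fastforce
  have flux_pos: "0 < ?flux j m" if "1 \<le> j" "j < S" "m \<le> S" for j m
    using that V_pos L_pos D_pos \<delta>_mono by (intro perturbation_flux_pos) (auto simp: less_imp_le)
  have V_nz: "\<eta> (AV j) \<noteq> 0" if "j \<in> {1..S}" for j
    using V_pos[OF that] by simp
  fix j assume j: "j \<in> {1..S}"
  show "vapour_total \<eta> j \<noteq> liquid_total \<eta> j + dsum \<delta> j"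
  proof (cases "j = S")
    case True
    have "0 < ?flux (S - 1) S" using S2 by (intro flux_pos) auto
    moreover have "vapour_total \<eta> S = 1 + dsum \<delta> S - (1 / (e * \<eta> (AV S))) * ?flux (S - 1) S"
      using zero S2 e_nz n_nz V_nz by (rule g_delta_zero_vapour_sums(2))
    ultimately show ?thesis
      using True V_pos[of S] e_nz S2 g_delta_zero_liquid_total[OF zero j] by simp
  next
    case False
    then have "j \<in> {1..<S}" using j by simp
    with zero S2 e_nz n_nz V_nz have "vapour_total \<eta> j = 1 + dsum \<delta> j - (1 / \<eta> (AV j)) * ?flux j j"
      by (rule g_delta_zero_vapour_sums(1))
    then show ?thesis
      using flux_pos[of j j] V_pos[of j] j False g_delta_zero_liquid_total[OF zero j] by simp
  qed
qed (use n_nz hold_nz hl_nz in auto)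

end

theorem mainTheorem6:
  fixes S :: nat and cC :: "'c::finite" and I :: "real set"
    and \<delta> :: "nat \<Rightarrow> 'c \<Rightarrow> real"
    and fvle :: "'c \<Rightarrow> real \<Rightarrow> real \<Rightarrow> real^'c \<Rightarrow> real"
    and fhl fhv :: "real \<Rightarrow> real^'c \<Rightarrow> real" and fhold :: "real \<Rightarrow> real"
    and eps P Q Tc :: "real \<Rightarrow> real"
    and n H T V L :: "nat \<Rightarrow> real \<Rightarrow> real" and x y :: "nat \<Rightarrow> real \<Rightarrow> real^'c"
  assumes S2: "S \<ge> 2" and C2: "CARD('c) \<ge> 2" and I_int: "is_interval I"
    and fvle_C1: "\<forall>i. C1_map (\<lambda>(p::real, tt::real, xx::real^'c). fvle i p tt xx)"
    and fhl_C1: "C1_map (\<lambda>(tt::real, xx::real^'c). fhl tt xx)"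
    and fhv_C1: "C1_map (\<lambda>(tt::real, xx::real^'c). fhv tt xx)"
    and fhold_C1: "C1_map fhold"
    and ctrl_C1: "C1_on I eps" "C1_on I P" "C1_on I Q" "C1_on I Tc"
    and state_C1: "\<forall>j\<in>{1..S}. C1_on I (n j) \<and> C1_on I (H j) \<and> C1_on I (T j) \<and> C1_on I (V j)
                     \<and> C1_on I (x j) \<and> C1_on I (y j)"
    and L_C1: "\<forall>j\<in>{1..<S}. C1_on I (L j)"
    and \<delta>_nonneg: "\<forall>j\<in>{1..S}. \<forall>i. \<delta> j i \<ge> 0"
    and \<delta>_pos: "0 < dsum \<delta> 1"
    and \<delta>_mono: "\<forall>j\<in>{1..<S}. dsum \<delta> j \<le> dsum \<delta> (j+1)"
    (* (TM) *)
    and TM1: "\<forall>t\<in>I. (n 1 has_real_derivative (L 1 t - V 1 t)) (at t within I)"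
    and TMj: "\<forall>t\<in>I. \<forall>j\<in>{2..S-1}. (n j has_real_derivative
                 (L j t - V j t - L (j-1) t + V (j-1) t)) (at t within I)"
    and TMS: "\<forall>t\<in>I. (n S has_real_derivative
                 (- eps t * V S t - L (S-1) t + V (S-1) t)) (at t within I)"
    (* (CM_delta) *)
    and CM1: "\<forall>t\<in>I. \<forall>i. i \<noteq> cC \<longrightarrow> ((\<lambda>s. x 1 s $ i) has_real_derivative
                 (L 1 t * (x 2 t $ i - x 1 t $ i - \<delta> 1 i) - V 1 t * (y 1 t $ i - x 1 t $ i - \<delta> 1 i)) / n 1 t)
                 (at t within I)"
    and CMj: "\<forall>t\<in>I. \<forall>j\<in>{2..S-1}. \<forall>i. i \<noteq> cC \<longrightarrow> ((\<lambda>s. x j s $ i) has_real_derivative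
                 (L j t * (x (j+1) t $ i - x j t $ i - \<delta> j i) - V j t * (y j t $ i - x j t $ i - \<delta> j i)
                  + V (j-1) t * (y (j-1) t $ i - x j t $ i - \<delta> j i)) / n j t) (at t within I)"
    and CMS: "\<forall>t\<in>I. \<forall>i. i \<noteq> cC \<longrightarrow> ((\<lambda>s. x S s $ i) has_real_derivative
                 (eps t * V S t * (x S t $ i + \<delta> S i - y S t $ i)
                  + V (S-1) t * (y (S-1) t $ i - x S t $ i - \<delta> S i)) / n S t) (at t within I)"
    (* (EB) *)
    and EB1: "\<forall>t\<in>I. (H 1 has_real_derivative
                 (L 1 t * fhl (T 2 t) (x 2 t) - V 1 t * fhv (T 1 t) (y 1 t) + Q t)) (at t within I)"
    and EBj: "\<forall>t\<in>I. \<forall>j\<in>{2..S-1}. (H j has_real_derivative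
                 (L j t * fhl (T (j+1) t) (x (j+1) t) - V j t * fhv (T j t) (y j t)
                  - L (j-1) t * fhl (T j t) (x j t) + V (j-1) t * fhv (T (j-1) t) (y (j-1) t)))
                 (at t within I)"
    and EBS: "\<forall>t\<in>I. (H S has_real_derivative
                 ((1 - eps t) * V S t * fhl (Tc t) (y S t) - V S t * fhv (T S t) (y S t)
                  - L (S-1) t * fhl (T S t) (x S t) + V (S-1) t * fhv (T (S-1) t) (y (S-1) t)))
                 (at t within I)"
    (* g_delta = 0 *)
    and alg: "\<forall>t\<in>I. \<forall>r\<in>geqns S. g_delta S cC \<delta> fvle fhl fhold (eps t) (P t)
                 (\<lambda>j. n j t) (\<lambda>j. H j t) (\<lambda>j. x j t) (eta_sol cC V y T x L t) r = 0"
    (* non-degeneracy along the solution *)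
    and eps_nz: "\<forall>t\<in>I. eps t \<noteq> 0"
    and n_nz: "\<forall>t\<in>I. \<forall>j\<in>{1..S}. n j t \<noteq> 0"
    and V_pos: "\<forall>t\<in>I. \<forall>j\<in>{1..S}. V j t > 0"
    and L_pos: "\<forall>t\<in>I. \<forall>j\<in>{1..<S}. L j t > 0"
    and hold_nz: "\<forall>t\<in>I. \<forall>j\<in>{1..<S}. deriv fhold (L j t) \<noteq> 0"
    and hl_nz: "\<forall>t\<in>I. \<forall>j\<in>{1..S}. deriv (\<lambda>tt. fhl tt (x j t)) (T j t) \<noteq> 0"
  shows "\<forall>t\<in>I.
     nonsingular_on (jac_eta S cC \<delta> fvle fhl fhold (eps t) (P t)
                       (\<lambda>j. n j t) (\<lambda>j. H j t) (\<lambda>j. x j t) (eta_sol cC V y T x L t))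
                    (geqns S) (avars S)
   \<and> (\<forall>j\<in>{1..<S}. (\<Sum>i\<in>UNIV. y j t $ i) =
        1 + dsum \<delta> j - (1 / V j t) * ((\<Sum>k=1..j. L k t * dsum \<delta> k)
                                      - (\<Sum>k=1..<j. V k t * (dsum \<delta> k - dsum \<delta> (k+1)))))
   \<and> (\<Sum>i\<in>UNIV. y S t $ i) =
        1 + dsum \<delta> S - (1 / (eps t * V S t)) * ((\<Sum>k=1..<S. L k t * dsum \<delta> k)
                                      - (\<Sum>k=1..<S. V k t * (dsum \<delta> k - dsum \<delta> (k+1))))"
  apply (intro ballI)
  subgoal premises t for t
  proof -
    let ?\<eta> = "eta_sol cC V y T x L t"
    have zero: "\<forall>r\<in>geqns S. g_delta S cC \<delta> fvle fhl fhold (eps t) (P t)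
                   (\<lambda>j. n j t) (\<lambda>j. H j t) (\<lambda>j. x j t) ?\<eta> r = 0"
      using alg t by blast
    have liquid: "liquid_composition cC (\<lambda>j. x j t) ?\<eta> j = x j t" for j
      by (simp add: liquid_composition_def eta_sol_def vec_eq_iff)
    have "nonsingular_on (jac_eta S cC \<delta> fvle fhl fhold (eps t) (P t)
            (\<lambda>j. n j t) (\<lambda>j. H j t) (\<lambda>j. x j t) ?\<eta>) (geqns S) (avars S)"
      using zero S2
    proof (rule g_delta_zero_jacobian_nonsingular)
      show "fhold differentiable at (?\<eta> (AL j)) \<and> deriv fhold (?\<eta> (AL j)) \<noteq> 0"
        if "j \<in> {1..<S}" for j
        using that t hold_nz C1_map_differentiable[OF fhold_C1] by (simp add: eta_sol_def)
      show "(\<lambda>tt. fhl tt (liquid_composition cC (\<lambda>j. x j t) ?\<eta> j)) differentiable at (?\<eta> (AT j))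
            \<and> deriv (\<lambda>tt. fhl tt (liquid_composition cC (\<lambda>j. x j t) ?\<eta> j)) (?\<eta> (AT j)) \<noteq> 0"
        if "j \<in> {1..S}" for j
        using that t hl_nz C1_map_partial_differentiable[OF fhl_C1] by (simp add: liquid eta_sol_def)
    qed (use t eps_nz n_nz V_pos L_pos \<delta>_pos \<delta>_mono in \<open>auto simp: eta_sol_def\<close>)
    moreover have "(\<Sum>i\<in>UNIV. ?\<eta> (AY j i)) = 1 + dsum \<delta> j - (1 / ?\<eta> (AV j)) *
            perturbation_flux (\<lambda>k. ?\<eta> (AL k)) (\<lambda>k. ?\<eta> (AV k)) (dsum \<delta>) j j" if "j \<in> {1..<S}" for j
      by (rule g_delta_zero_vapour_sums(1)[OF zero S2 _ _ _ that])
        (use t eps_nz n_nz V_pos in \<open>fastforce simp: eta_sol_def\<close>)+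
    moreover have "(\<Sum>i\<in>UNIV. ?\<eta> (AY S i)) = 1 + dsum \<delta> S - (1 / (eps t * ?\<eta> (AV S))) *
            perturbation_flux (\<lambda>k. ?\<eta> (AL k)) (\<lambda>k. ?\<eta> (AV k)) (dsum \<delta>) (S - 1) S"
      by (rule g_delta_zero_vapour_sums(2)[OF zero S2])
        (use t eps_nz n_nz V_pos in \<open>fastforce simp: eta_sol_def\<close>)+
    moreover have "{1..S - 1} = {1..<S}" using S2 by auto
    ultimately show ?thesis
      by (simp add: eta_sol_def perturbation_flux_def)
  qed
  done

end
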